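(* Let $(P,w)$ be a naturally labeled poset with $n$ elements and let $\alpha$ be a composition of $n$. Then $$\sum_{\sigma\in\mathcal L_\alpha(P,w)}(-1)^{|\mathrm{Des}(\sigma)\setminus S_\alpha|}=|\mathcal L^*_\alpha(P,w)|.$$ In particular the left-hand side is nonnegative.
   Context: A composition $\alpha=(\alpha_1,\dots,\alpha_\ell)$ of $n$ is a sequence of positive integers summing to $n$; $S_\alpha=\{\alpha_1,\alpha_1+\alpha_2,\dots,\alpha_1+\dots+\alpha_{\ell-1}\}$; blocks $B_i(\alpha)=\{\alpha_1+\dots+\alpha_{i-1}+1,\dots,\alpha_1+\dots+\alpha_i\}$. A permutation $\sigma\in\mathfrak S_n$ (one-line notation) is $\alpha$-unimodal if for each $i$, writing $B_i(\alpha)=[a,b]$, there is $k\in[a,b]$ with $\sigma_a>\dots>\sigma_k<\dots<\sigma_b$. $\mathrm{Des}(\sigma)=\{i\in[n-1]:\sigma_i>\sigma_{i+1}\}$. A labeled poset $(P,w)$ is a finite poset $P$ with a bijection $w:P\to[n]$; it is naturally labeled if $x<_Py$ implies $w(x)<w(y)$. $\mathcal L(P,w)=\{\sigma\in\mathfrak S_n: \sigma^{-1}(w(x))<\sigma^{-1}(w(y))\text{ whenever }x<_Py\}$. $\mathcal L_\alpha(P,w)$ is the set of $\alpha$-unimodal $\sigma\in\mathcal L(P,w)$. For $\sigma\in\mathfrak S_n$ let $P_i^\alpha(\sigma)=\{w^{-1}(\sigma_j):j\in B_i(\alpha)\}$ with the induced order. $\mathcal L^*_\alpha(P,w)$ is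 the set of $\sigma\in\mathcal L_\alpha(P,w)$ such that $P_i^\alpha(\sigma)$ has a unique minimal element for every $i$. *)

theory Defs
  imports "HOL-Combinatorics.Permutations"
begin

definition is_composition :: "nat list \<Rightarrow> nat \<Rightarrow> bool" where
  "is_composition \<alpha> n \<longleftrightarrow> (\<forall>a\<in>set \<alpha>. 0 < a) \<and> sum_list \<alpha> = n"

definition comp_set :: "nat list \<Rightarrow> nat set" where
  "comp_set \<alpha> = {sum_list (take i \<alpha>) | i. 1 \<le> i \<and> i < length \<alpha>}"

(* Block B_{i+1}(alpha) (blocks indexed from 0 here, i < length alpha) *)
definition block :: "nat list \<Rightarrow> nat \<Rightarrow> nat set" where
  "block \<alpha> i = {sum_list (take i \<alpha>) + 1 .. sum_list (take (Suc i) \<alpha>)}"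

definition Des :: "nat \<Rightarrow> (nat \<Rightarrow> nat) \<Rightarrow> nat set" where
  "Des n \<sigma> = {i \<in> {1..n-1}. \<sigma> (Suc i) < \<sigma> i}"

definition alpha_unimodal :: "nat list \<Rightarrow> (nat \<Rightarrow> nat) \<Rightarrow> bool" where
  "alpha_unimodal \<alpha> \<sigma> \<longleftrightarrow>
     (\<forall>i < length \<alpha>. \<exists>k \<in> block \<alpha> i.
        (\<forall>j. j \<in> block \<alpha> i \<and> Suc j \<in> block \<alpha> i \<and> j < k \<longrightarrow> \<sigma> (Suc j) < \<sigma> j) \<and>
        (\<forall>j. j \<in> block \<alpha> i \<and> Suc j \<in> block \<alpha> i \<and> k \<le> j \<longrightarrow> \<sigma> j < \<sigma> (Suc j)))"

definition labeled_poset :: "'a set \<Rightarrow> ('a \<Rightarrow> 'a \<Rightarrow> bool) \<Rightarrow> ('a \<Rightarrow> nat) \<Rightarrow> nat \<Rightarrow> bool" where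
  "labeled_poset P le w n \<longleftrightarrow> finite P \<and> partial_order_on P {(x,y). x \<in> P \<and> y \<in> P \<and> le x y}
      \<and> bij_betw w P {1..n}"

definition strict :: "('a \<Rightarrow> 'a \<Rightarrow> bool) \<Rightarrow> 'a \<Rightarrow> 'a \<Rightarrow> bool" where
  "strict le x y \<longleftrightarrow> le x y \<and> x \<noteq> y"

definition naturally_labeled :: "'a set \<Rightarrow> ('a \<Rightarrow> 'a \<Rightarrow> bool) \<Rightarrow> ('a \<Rightarrow> nat) \<Rightarrow> bool" where
  "naturally_labeled P le w \<longleftrightarrow> (\<forall>x\<in>P. \<forall>y\<in>P. strict le x y \<longrightarrow> w x < w y)"

definition lin_ext :: "'a set \<Rightarrow> ('a \<Rightarrow> 'a \<Rightarrow> bool) \<Rightarrow> ('a \<Rightarrow> nat) \<Rightarrow> nat \<Rightarrow> (nat \<Rightarrow> nat) set" where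
  "lin_ext P le w n = {\<sigma>. \<sigma> permutes {1..n} \<and>
      (\<forall>x\<in>P. \<forall>y\<in>P. strict le x y \<longrightarrow> inv \<sigma> (w x) < inv \<sigma> (w y))}"

definition lin_ext_alpha :: "nat list \<Rightarrow> 'a set \<Rightarrow> ('a \<Rightarrow> 'a \<Rightarrow> bool) \<Rightarrow> ('a \<Rightarrow> nat) \<Rightarrow> nat \<Rightarrow> (nat \<Rightarrow> nat) set" where
  "lin_ext_alpha \<alpha> P le w n = {\<sigma> \<in> lin_ext P le w n. alpha_unimodal \<alpha> \<sigma>}"

definition block_poset :: "nat list \<Rightarrow> 'a set \<Rightarrow> ('a \<Rightarrow> nat) \<Rightarrow> (nat \<Rightarrow> nat) \<Rightarrow> nat \<Rightarrow> 'a set" where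
  "block_poset \<alpha> P w \<sigma> i = {inv_into P w (\<sigma> j) | j. j \<in> block \<alpha> i}"

definition unique_min :: "('a \<Rightarrow> 'a \<Rightarrow> bool) \<Rightarrow> 'a set \<Rightarrow> bool" where
  "unique_min le Q \<longleftrightarrow> (\<exists>!x. x \<in> Q \<and> \<not> (\<exists>y\<in>Q. strict le y x))"

definition lin_ext_alpha_star :: "nat list \<Rightarrow> 'a set \<Rightarrow> ('a \<Rightarrow> 'a \<Rightarrow> bool) \<Rightarrow> ('a \<Rightarrow> nat) \<Rightarrow> nat \<Rightarrow> (nat \<Rightarrow> nat) set" where
  "lin_ext_alpha_star \<alpha> P le w n = {\<sigma> \<in> lin_ext_alpha \<alpha> P le w n.
      \<forall>i < length \<alpha>. unique_min le (block_poset \<alpha> P w \<sigma> i)}"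

end

theory Submission
  imports Defs "HOL-Library.Disjoint_Sets"
begin

text \<open>
  On each block an \<open>\<alpha>\<close>-unimodal word is determined by its set of values and its left part, the
  values in front of the valley, i.e. at the descents inside the block; hence the sign of \<open>\<sigma>\<close> is
  \<open>-1\<close> raised to the total size of the left parts. For a linear extension of a naturally labeled
  poset, a left part consists of labels of minimal elements of the block poset other than the
  smallest label, and conversely any such set can be installed without touching the rest of \<open>\<sigma>\<close>.
  So if some block poset has a second minimal element, adding or removing the largest such label
  in the left part of the first such block is a sign-reversing involution. What remains is
  \<open>L*\<^sub>\<alpha>\<close>, where all left parts are empty and every sign is \<open>+1\<close>.
\<close>

text \<open>A word that decreases down to its valley and increases afterwards lists its letters in this
  order, where \<open>L\<close> is the set of letters in front of the valley.\<close>

definition valley_less :: "nat set \<Rightarrow> nat \<Rightarrow> nat \<Rightarrow> bool" where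
  "valley_less L x y \<longleftrightarrow> (x \<in> L \<and> (y \<notin> L \<or> y < x)) \<or> (x \<notin> L \<and> y \<notin> L \<and> x < y)"

lemma valley_less_irrefl: "\<not> valley_less L x x"
  by (auto simp: valley_less_def)

lemma valley_less_asym: "valley_less L x y \<Longrightarrow> \<not> valley_less L y x"
  by (auto simp: valley_less_def)

lemma valley_less_trans: "valley_less L x y \<Longrightarrow> valley_less L y z \<Longrightarrow> valley_less L x z"
  by (auto simp: valley_less_def)

lemma valley_less_total: "x \<noteq> y \<Longrightarrow> valley_less L x y \<or> valley_less L y x"
  by (auto simp: valley_less_def)

definition valley_rank :: "nat set \<Rightarrow> nat set \<Rightarrow> nat \<Rightarrow> nat" where
  "valley_rank L X x = card {y \<in> X. valley_less L y x}"

lemma valley_rank_strict_mono: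
  assumes "finite X" "x \<in> X" "y \<in> X" "valley_less L y x"
  shows "valley_rank L X y < valley_rank L X x"
proof -
  have "{z \<in> X. valley_less L z y} \<subset> {z \<in> X. valley_less L z x}"
    using assms valley_less_trans valley_less_irrefl by blast
  then show ?thesis
    unfolding valley_rank_def using assms(1) by (simp add: psubset_card_mono)
qed

lemma valley_rank_less_iff:
  assumes "finite X" "x \<in> X" "y \<in> X"
  shows "valley_rank L X y < valley_rank L X x \<longleftrightarrow> valley_less L y x"
proof
  assume less: "valley_rank L X y < valley_rank L X x"
  then have "x \<noteq> y" and "\<not> valley_less L x y"
    using valley_rank_strict_mono[OF assms(1,3,2), where L=L] by auto
  then show "valley_less L y x"
    using valley_less_total by blast
qed (rule valley_rank_strict_mono[OF assms])

lemma valley_rank_less_card: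
  assumes "finite X" "x \<in> X"
  shows "valley_rank L X x < card X"
proof -
  have "{y \<in> X. valley_less L y x} \<subset> X"
    using assms(2) valley_less_irrefl by blast
  then show ?thesis
    unfolding valley_rank_def by (rule psubset_card_mono[OF assms(1)])
qed

lemma inj_on_valley_rank:
  assumes "finite X"
  shows "inj_on (valley_rank L X) X"
proof (rule inj_onI, rule ccontr)
  fix x y assume xy: "x \<in> X" "y \<in> X" "valley_rank L X x = valley_rank L X y" "x \<noteq> y"
  then consider "valley_less L x y" | "valley_less L y x"
    using valley_less_total by blast
  then show False
    using valley_rank_strict_mono[OF assms xy(1,2), where L=L] valley_rank_strict_mono[OF assms xy(2,1), where L=L] xy(3)
    by cases auto
qed

lemma bij_betw_valley_rank:
  assumes "finite X"
  shows "bij_betw (valley_rank L X) X {..<card X}"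
proof -
  have "valley_rank L X ` X \<subseteq> {..<card X}"
    using valley_rank_less_card[OF assms] by auto
  moreover have "card (valley_rank L X ` X) = card {..<card X}"
    using inj_on_valley_rank[OF assms] by (simp add: card_image)
  ultimately have "valley_rank L X ` X = {..<card X}"
    by (simp add: card_subset_eq)
  then show ?thesis
    using inj_on_valley_rank[OF assms] by (simp add: bij_betw_def)
qed

lemma valley_rank_less_card_iff:
  assumes "finite X" "L \<subseteq> X" "x \<in> X"
  shows "valley_rank L X x < card L \<longleftrightarrow> x \<in> L"
proof
  have "finite L"
    using assms(1,2) by (rule finite_subset[rotated])
  assume "x \<in> L"
  then have "{y \<in> X. valley_less L y x} \<subseteq> L - {x}"
    using valley_less_irrefl by (auto simp: valley_less_def)
  then have "valley_rank L X x \<le> card (L - {x})"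
    unfolding valley_rank_def using \<open>finite L\<close> by (simp add: card_mono)
  also have "\<dots> < card L"
    using \<open>finite L\<close> \<open>x \<in> L\<close> by (rule card_Diff1_less)
  finally show "valley_rank L X x < card L" .
next
  assume "valley_rank L X x < card L"
  moreover have "card L \<le> valley_rank L X x" if "x \<notin> L"
  proof -
    have "L \<subseteq> {y \<in> X. valley_less L y x}"
      using that assms by (auto simp: valley_less_def)
    then show ?thesis
      unfolding valley_rank_def using assms(1) by (simp add: card_mono)
  qed
  ultimately show "x \<in> L"
    by linarith
qed

definition valley_word :: "nat \<Rightarrow> nat set \<Rightarrow> nat set \<Rightarrow> nat \<Rightarrow> nat" where
  "valley_word a X L p = inv_into X (valley_rank L X) (p - a)"

lemma
  assumes "finite X" "p \<in> {a..<a + card X}"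
  shows valley_word_mem: "valley_word a X L p \<in> X"
    and valley_rank_valley_word: "valley_rank L X (valley_word a X L p) = p - a"
proof -
  have "p - a \<in> valley_rank L X ` X"
    using assms bij_betw_valley_rank[OF assms(1)] by (auto simp: bij_betw_def)
  then show "valley_word a X L p \<in> X" "valley_rank L X (valley_word a X L p) = p - a"
    unfolding valley_word_def by (auto intro: inv_into_into f_inv_into_f)
qed

lemma valley_word_valley_rank:
  assumes "finite X" "x \<in> X"
  shows "valley_word a X L (a + valley_rank L X x) = x"
  using assms inj_on_valley_rank[OF assms(1)] by (simp add: valley_word_def)

lemma bij_betw_valley_word:
  assumes "finite X"
  shows "bij_betw (valley_word a X L) {a..<a + card X} X"
proof (rule bij_betw_byWitness[where f' = "\<lambda>x. a + valley_rank L X x"])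
  show "\<forall>p\<in>{a..<a + card X}. a + valley_rank L X (valley_word a X L p) = p"
    using valley_rank_valley_word[OF assms] by auto
  show "\<forall>x\<in>X. valley_word a X L (a + valley_rank L X x) = x"
    using valley_word_valley_rank[OF assms] by blast
  show "valley_word a X L ` {a..<a + card X} \<subseteq> X"
    using valley_word_mem[OF assms] by blast
  show "(\<lambda>x. a + valley_rank L X x) ` X \<subseteq> {a..<a + card X}"
    using valley_rank_less_card[OF assms] by auto
qed

lemma valley_less_valley_word:
  assumes "finite X" "a \<le> p" "p < q" "q < a + card X"
  shows "valley_less L (valley_word a X L p) (valley_word a X L q)"
proof -
  have p: "p \<in> {a..<a + card X}" and q: "q \<in> {a..<a + card X}"
    using assms by auto
  have "valley_rank L X (valley_word a X L p) < valley_rank L X (valley_word a X L q)"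
    using valley_rank_valley_word[OF assms(1) p] valley_rank_valley_word[OF assms(1) q] assms
    by simp
  then show ?thesis
    using valley_rank_less_iff[OF assms(1) valley_word_mem[OF assms(1) q] valley_word_mem[OF assms(1) p]]
    by simp
qed

definition valley_at :: "(nat \<Rightarrow> nat) \<Rightarrow> nat set \<Rightarrow> nat \<Rightarrow> bool" where
  "valley_at \<tau> B k \<longleftrightarrow> k \<in> B \<and>
     (\<forall>j. j \<in> B \<and> Suc j \<in> B \<and> j < k \<longrightarrow> \<tau> (Suc j) < \<tau> j) \<and>
     (\<forall>j. j \<in> B \<and> Suc j \<in> B \<and> k \<le> j \<longrightarrow> \<tau> j < \<tau> (Suc j))"

lemma valley_at_cong:
  assumes "\<And>p. p \<in> B \<Longrightarrow> f p = g p"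
  shows "valley_at f B k \<longleftrightarrow> valley_at g B k"
  using assms unfolding valley_at_def by simp

lemma valley_at_decreasing:
  assumes "valley_at \<tau> {a..<b} k" "a \<le> p" "p < q" "q \<le> k"
  shows "\<tau> q < \<tau> p"
proof -
  have "a \<le> p \<longrightarrow> q \<le> k \<longrightarrow> \<tau> q < \<tau> p"
    using \<open>p < q\<close>
  proof (induction rule: less_Suc_induct)
    case (1 i)
    then show ?case
      using assms(1) unfolding valley_at_def by auto
  qed auto
  with assms show ?thesis
    by blast
qed

lemma valley_at_increasing:
  assumes "valley_at \<tau> {a..<b} k" "k \<le> p" "p < q" "q < b"
  shows "\<tau> p < \<tau> q"
proof -
  have "k \<le> p \<longrightarrow> q < b \<longrightarrow> \<tau> p < \<tau> q"
    using \<open>p < q\<close>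
  proof (induction rule: less_Suc_induct)
    case (1 i)
    then show ?case
      using assms(1) unfolding valley_at_def by auto
  qed auto
  with assms show ?thesis
    by blast
qed

lemma valley_at_descents:
  assumes "valley_at \<tau> {a..<b} k"
  shows "{j. j \<in> {a..<b} \<and> Suc j \<in> {a..<b} \<and> \<tau> (Suc j) < \<tau> j} = {a..<k}"
proof (intro equalityI subsetI)
  fix j assume "j \<in> {j. j \<in> {a..<b} \<and> Suc j \<in> {a..<b} \<and> \<tau> (Suc j) < \<tau> j}"
  then have "j \<in> {a..<b}" "Suc j \<in> {a..<b}" "\<not> \<tau> j < \<tau> (Suc j)"
    by auto
  with assms show "j \<in> {a..<k}"
    unfolding valley_at_def by (meson atLeastLessThan_iff not_le)
qed (use assms in \<open>auto simp: valley_at_def\<close>)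

lemma valley_less_valley_at:
  assumes "valley_at \<tau> {a..<b} k" "inj_on \<tau> {a..<b}" "a \<le> p" "p < q" "q < b"
  shows "valley_less (\<tau> ` {a..<k}) (\<tau> p) (\<tau> q)"
proof -
  have k: "k < b"
    using assms(1) unfolding valley_at_def by simp
  have "\<tau> x \<in> \<tau> ` {a..<k} \<longleftrightarrow> x < k" if "a \<le> x" "x < b" for x
    using inj_on_image_mem_iff[OF assms(2), of x "{a..<k}"] that k by auto
  then show ?thesis
    using valley_at_decreasing[OF assms(1), of p q] valley_at_increasing[OF assms(1), of p q] assms
    by (auto simp: valley_less_def)
qed

lemma valley_at_predecessors:
  assumes "valley_at \<tau> {a..<b} k" "inj_on \<tau> {a..<b}" "p \<in> {a..<b}"
  shows "{y \<in> \<tau> ` {a..<b}. valley_less (\<tau> ` {a..<k}) y (\<tau> p)} = \<tau> ` {a..<p}"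
proof (intro equalityI subsetI)
  let ?L = "\<tau> ` {a..<k}"
  fix y assume "y \<in> {y \<in> \<tau> ` {a..<b}. valley_less ?L y (\<tau> p)}"
  then obtain q where q: "q \<in> {a..<b}" "y = \<tau> q" and before: "valley_less ?L (\<tau> q) (\<tau> p)"
    by auto
  have "q < p"
  proof (rule ccontr)
    assume "\<not> q < p"
    then consider "q = p" | "p < q"
      by linarith
    then show False
    proof cases
      case 1
      then show False
        using before valley_less_irrefl by simp
    next
      case 2
      then have "valley_less ?L (\<tau> p) (\<tau> q)"
        using valley_less_valley_at[OF assms(1,2)] q assms(3) by simp
      then show False
        using before valley_less_asym by blast
    qed
  qed
  then show "y \<in> \<tau> ` {a..<p}"
    using q by auto
next
  fix y assume "y \<in> \<tau> ` {a..<p}"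
  then obtain q where "a \<le> q" "q < p" "y = \<tau> q"
    by auto
  then show "y \<in> {y \<in> \<tau> ` {a..<b}. valley_less (\<tau> ` {a..<k}) y (\<tau> p)}"
    using valley_less_valley_at[OF assms(1,2), of q p] assms(3) by auto
qed

lemma valley_at_eq_valley_word:
  assumes "valley_at \<tau> {a..<b} k" "inj_on \<tau> {a..<b}" "p \<in> {a..<b}"
  shows "\<tau> p = valley_word a (\<tau> ` {a..<b}) (\<tau> ` {a..<k}) p"
proof -
  let ?X = "\<tau> ` {a..<b}" and ?L = "\<tau> ` {a..<k}"
  have "inj_on \<tau> {a..<p}"
    using assms(2) by (rule inj_on_subset) (use assms(3) in auto)
  then have "valley_rank ?L ?X (\<tau> p) = p - a"
    unfolding valley_rank_def valley_at_predecessors[OF assms] by (simp add: card_image)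
  then show ?thesis
    using valley_word_valley_rank[of ?X "\<tau> p" a ?L] assms(3) by simp
qed

lemma valley_word_image_prefix:
  assumes "finite X" "L \<subseteq> X"
  shows "valley_word a X L ` {a..<a + card L} = L"
proof (intro equalityI subsetI)
  fix x assume "x \<in> valley_word a X L ` {a..<a + card L}"
  then obtain p where p: "a \<le> p" "p < a + card L" and x: "x = valley_word a X L p"
    by auto
  have "card L \<le> card X"
    using assms by (rule card_mono)
  with p have p_range: "p \<in> {a..<a + card X}"
    by auto
  have "valley_rank L X x < card L"
    using valley_rank_valley_word[OF assms(1) p_range] p x by simp
  then show "x \<in> L"
    using valley_rank_less_card_iff[OF assms] valley_word_mem[OF assms(1) p_range] x by blast
next
  fix x assume "x \<in> L"
  then have "x \<in> X" and "valley_rank L X x < card L"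
    using valley_rank_less_card_iff[OF assms, of x] assms(2) by auto
  then show "x \<in> valley_word a X L ` {a..<a + card L}"
    using valley_word_valley_rank[OF assms(1) \<open>x \<in> X\<close>, of a L]
    by (intro image_eqI[of _ _ "a + valley_rank L X x"]) auto
qed

lemma valley_rank_Min:
  assumes "finite X" "L \<subseteq> X" "Min X \<notin> L"
  shows "valley_rank L X (Min X) = card L"
proof -
  have "valley_less L y (Min X) \<longleftrightarrow> y \<in> L" if "y \<in> X" for y
    using assms(3) Min_le[OF assms(1) that] by (auto simp: valley_less_def)
  then have "{y \<in> X. valley_less L y (Min X)} = L"
    using assms(2) by auto
  then show ?thesis
    unfolding valley_rank_def by simp
qed

lemma valley_at_valley_word:
  assumes "finite X" "X \<noteq> {}" "L \<subseteq> X - {Min X}"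
  shows "valley_at (valley_word a X L) {a..<a + card X} (a + card L)"
proof -
  let ?m = "Min X" and ?\<tau> = "valley_word a X L"
  have LX: "L \<subseteq> X" and m: "?m \<in> X" "?m \<notin> L"
    using assms by auto
  have "card L < card X"
    by (rule psubset_card_mono[OF assms(1)]) (use LX m in blast)
  have in_L: "?\<tau> j \<in> L \<longleftrightarrow> j < a + card L" if "j \<in> {a..<a + card X}" for j
    using valley_rank_less_card_iff[OF assms(1) LX valley_word_mem[OF assms(1) that, where L=L]]
      valley_rank_valley_word[OF assms(1) that, where L=L] that by auto
  have valley: "?\<tau> (a + card L) = ?m"
    using valley_word_valley_rank[OF assms(1) m(1), of a L] valley_rank_Min[OF assms(1) LX m(2)] by simp
  have step: "valley_less L (?\<tau> j) (?\<tau> (Suc j))" if "a \<le> j" "Suc j < a + card X" for j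
    using valley_less_valley_word[OF assms(1) that(1) lessI that(2)] .
  have "?\<tau> (Suc j) < ?\<tau> j" if "a \<le> j" "Suc j < a + card X" "j < a + card L" for j
  proof (cases "Suc j = a + card L")
    case True
    have "?\<tau> j \<in> X - {?m}"
      using in_L[of j] that LX assms(3) by auto
    then show ?thesis
      using True valley assms(1) by (simp add: order_less_le)
  next
    case False
    then show ?thesis
      using step[OF that(1,2)] in_L[of j] in_L[of "Suc j"] that by (auto simp: valley_less_def)
  qed
  moreover have "?\<tau> j < ?\<tau> (Suc j)" if "a \<le> j" "Suc j < a + card X" "a + card L \<le> j" for j
    using step[OF that(1,2)] in_L[of j] in_L[of "Suc j"] that by (auto simp: valley_less_def)
  ultimately show ?thesis
    using \<open>card L < card X\<close> unfolding valley_at_def by auto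
qed

lemma permutes_override_on:
  assumes "\<sigma> permutes S" "B \<subseteq> S" "bij_betw f B (\<sigma> ` B)"
  shows "(\<lambda>p. if p \<in> B then f p else \<sigma> p) permutes S"
proof -
  let ?h = "\<lambda>p. if p \<in> B then f p else \<sigma> p"
  have "bij_betw \<sigma> (S - B) (S - \<sigma> ` B)"
    unfolding bij_betw_def
  proof
    show "inj_on \<sigma> (S - B)"
      using permutes_inj_on[OF assms(1)] .
    show "\<sigma> ` (S - B) = S - \<sigma> ` B"
      using image_set_diff[OF permutes_inj[OF assms(1)]] permutes_image[OF assms(1)] by simp
  qed
  then have outside: "bij_betw ?h (S - B) (S - \<sigma> ` B)"
    by (rule bij_betw_cong[THEN iffD1, rotated]) simp
  have inside: "bij_betw ?h B (\<sigma> ` B)"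
    using assms(3) by (rule bij_betw_cong[THEN iffD1, rotated]) simp
  have "bij_betw ?h (B \<union> (S - B)) (\<sigma> ` B \<union> (S - \<sigma> ` B))"
    using bij_betw_combine[OF inside outside] by blast
  moreover have "B \<union> (S - B) = S" "\<sigma> ` B \<union> (S - \<sigma> ` B) = S"
    using assms(1,2) permutes_image[OF assms(1)] by auto
  ultimately show ?thesis
    using assms(1,2) by (auto intro!: bij_imp_permutes simp: permutes_not_in)
qed

definition toggle_member :: "'b \<Rightarrow> 'b set \<Rightarrow> 'b set" where
  "toggle_member t L = (if t \<in> L then L - {t} else insert t L)"

lemma toggle_member_toggle_member: "toggle_member t (toggle_member t L) = L"
  by (auto simp: toggle_member_def)

lemma toggle_member_subset: "t \<in> A \<Longrightarrow> L \<subseteq> A \<Longrightarrow> toggle_member t L \<subseteq> A"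
  by (auto simp: toggle_member_def)

lemma card_toggle_member:
  assumes "finite L"
  shows "card (toggle_member t L) = Suc (card L) \<or> Suc (card (toggle_member t L)) = card L"
proof -
  have "0 < card L" if "t \<in> L"
    using assms that card_gt_0_iff by blast
  then show ?thesis
    using assms by (auto simp: toggle_member_def)
qed

locale naturally_labeled_composition =
  fixes P :: "'a set" and le :: "'a \<Rightarrow> 'a \<Rightarrow> bool" and w :: "'a \<Rightarrow> nat"
    and n :: nat and \<alpha> :: "nat list"
  assumes labeled_poset: "labeled_poset P le w n"
    and naturally_labeled: "naturally_labeled P le w"
    and composition: "is_composition \<alpha> n"
begin

definition block_start :: "nat \<Rightarrow> nat" where
  "block_start i = sum_list (take i \<alpha>) + 1"

lemma block_eq: "block \<alpha> i = {block_start i..<block_start (Suc i)}"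
  unfolding block_def block_start_def by auto

lemma block_start_mono:
  assumes "i \<le> j"
  shows "block_start i \<le> block_start j"
proof -
  obtain d where "j = i + d"
    using assms le_Suc_ex by blast
  then show ?thesis
    by (simp add: block_start_def take_add)
qed

lemma block_start_le: "block_start i \<le> Suc n"
proof -
  have "sum_list (take i \<alpha>) \<le> sum_list (take i \<alpha>) + sum_list (drop i \<alpha>)"
    by simp
  also have "\<dots> = n"
    using composition by (simp add: is_composition_def flip: sum_list_append)
  finally show ?thesis
    by (simp add: block_start_def)
qed

lemma block_start_length: "block_start (length \<alpha>) = Suc n"
  using composition by (simp add: block_start_def is_composition_def)

lemma block_start_strict_mono:
  assumes "i < length \<alpha>"
  shows "block_start i < block_start (Suc i)"
proof -
  have "0 < \<alpha> ! i"
    using composition assms unfolding is_composition_def by (meson nth_mem)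
  then show ?thesis
    using assms by (simp add: block_start_def take_Suc_conv_app_nth)
qed

lemma block_subset: "block \<alpha> i \<subseteq> {1..n}"
  using block_start_le[of "Suc i"] by (auto simp: block_eq block_start_def)

lemma disjoint_blocks:
  assumes "i \<noteq> j"
  shows "block \<alpha> i \<inter> block \<alpha> j = {}"
proof -
  have "block \<alpha> i \<inter> block \<alpha> j = {}" if "i < j" for i j
    using block_start_mono[of "Suc i" j] that by (auto simp: block_eq)
  then show ?thesis
    using assms by (metis inf_commute nat_neq_iff)
qed

lemma mem_some_block:
  assumes "j \<in> {1..n}"
  shows "\<exists>i<length \<alpha>. j \<in> block \<alpha> i"
proof -
  have "\<exists>i<N. j \<in> block \<alpha> i" if "j < block_start N" for N
    using that
  proof (induction N)
    case 0
    then show ?case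
      using assms by (simp add: block_start_def)
  next
    case (Suc N)
    show ?case
    proof (cases "j < block_start N")
      case True
      then show ?thesis
        using Suc.IH less_SucI by blast
    next
      case False
      then have "j \<in> block \<alpha> N"
        using Suc.prems by (simp add: block_eq)
      then show ?thesis
        by blast
    qed
  qed
  then show ?thesis
    using assms block_start_length by simp
qed

lemma inner_pair_range:
  assumes "j \<in> block \<alpha> i" "Suc j \<in> block \<alpha> i"
  shows "j \<in> {1..n-1}"
  using assms block_subset by fastforce

lemma inner_pair_if_not_mem_comp_set:
  assumes "j \<in> {1..n-1}" "j \<notin> comp_set \<alpha>"
  obtains i where "i < length \<alpha>" "j \<in> block \<alpha> i" "Suc j \<in> block \<alpha> i"
proof -
  obtain i where i: "i < length \<alpha>" "j \<in> block \<alpha> i"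
    using mem_some_block assms(1) by fastforce
  have "Suc j \<noteq> block_start (Suc i)"
  proof
    assume end_of_block: "Suc j = block_start (Suc i)"
    show False
    proof (cases "Suc i < length \<alpha>")
      case True
      then have "j \<in> comp_set \<alpha>"
        using end_of_block unfolding comp_set_def block_start_def by fastforce
      with assms(2) show False ..
    next
      case False
      then have "Suc i = length \<alpha>"
        using i(1) by simp
      then show False
        using end_of_block block_start_length assms(1) by auto
    qed
  qed
  then have "Suc j \<in> block \<alpha> i"
    using i(2) by (auto simp: block_eq)
  with i show thesis
    using that by blast
qed

lemma inner_pair_not_mem_comp_set:
  assumes "j \<in> block \<alpha> i" "Suc j \<in> block \<alpha> i"
  shows "j \<notin> comp_set \<alpha>"
proof
  assume "j \<in> comp_set \<alpha>"
  then obtain r where r: "Suc j = block_start r"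
    unfolding comp_set_def block_start_def by auto
  show False
  proof (cases "r \<le> i")
    case True
    then show False
      using block_start_mono[OF True] r assms(1) by (simp add: block_eq)
  next
    case False
    then show False
      using block_start_mono[of "Suc i" r] r assms(2) by (simp add: block_eq)
  qed
qed

definition block_descents :: "(nat \<Rightarrow> nat) \<Rightarrow> nat \<Rightarrow> nat set" where
  "block_descents \<tau> i = {j. j \<in> block \<alpha> i \<and> Suc j \<in> block \<alpha> i \<and> \<tau> (Suc j) < \<tau> j}"

abbreviation inner_descents :: "(nat \<Rightarrow> nat) \<Rightarrow> nat set" where
  "inner_descents \<tau> \<equiv> Des n \<tau> - comp_set \<alpha>"

lemma inner_descents_eq: "inner_descents \<tau> = (\<Union>i<length \<alpha>. block_descents \<tau> i)"
proof (intro equalityI subsetI)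
  fix j assume "j \<in> inner_descents \<tau>"
  then show "j \<in> (\<Union>i<length \<alpha>. block_descents \<tau> i)"
    using inner_pair_if_not_mem_comp_set[of j] unfolding Des_def block_descents_def by auto
next
  fix j assume "j \<in> (\<Union>i<length \<alpha>. block_descents \<tau> i)"
  then obtain i where "i < length \<alpha>" "j \<in> block \<alpha> i" "Suc j \<in> block \<alpha> i" "\<tau> (Suc j) < \<tau> j"
    unfolding block_descents_def by blast
  then show "j \<in> inner_descents \<tau>"
    using inner_pair_range inner_pair_not_mem_comp_set unfolding Des_def by blast
qed

lemma card_inner_descents: "card (inner_descents \<tau>) = (\<Sum>i<length \<alpha>. card (block_descents \<tau> i))"
  unfolding inner_descents_eq
proof (rule card_UN_disjoint)
  show "\<forall>i\<in>{..<length \<alpha>}. finite (block_descents \<tau> i)"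
    by (simp add: block_descents_def block_eq)
  show "\<forall>i\<in>{..<length \<alpha>}. \<forall>j\<in>{..<length \<alpha>}.
      i \<noteq> j \<longrightarrow> block_descents \<tau> i \<inter> block_descents \<tau> j = {}"
    using disjoint_blocks unfolding block_descents_def by blast
qed simp

abbreviation w_inv :: "nat \<Rightarrow> 'a" where
  "w_inv \<equiv> inv_into P w"

lemma bij_betw_w: "bij_betw w P {1..n}"
  using labeled_poset unfolding labeled_poset_def by simp

lemma w_inv_mem: "v \<in> {1..n} \<Longrightarrow> w_inv v \<in> P"
  using bij_betw_w by (metis bij_betw_def inv_into_into)

lemma w_w_inv: "v \<in> {1..n} \<Longrightarrow> w (w_inv v) = v"
  using bij_betw_w by (metis bij_betw_def f_inv_into_f)

lemma w_inv_w: "x \<in> P \<Longrightarrow> w_inv (w x) = x"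
  using bij_betw_w by (metis bij_betw_def inv_into_f_f)

lemma inj_on_w_inv: "inj_on w_inv {1..n}"
  using bij_betw_w by (simp add: bij_betw_def inj_on_inv_into)

lemma w_mem: "x \<in> P \<Longrightarrow> w x \<in> {1..n}"
  using bij_betw_w by (metis bij_betwE)

lemma less_if_strict_w_inv:
  assumes "u \<in> {1..n}" "v \<in> {1..n}" "strict le (w_inv u) (w_inv v)"
  shows "u < v"
  using naturally_labeled assms w_inv_mem w_w_inv unfolding naturally_labeled_def by metis

abbreviation L_alpha :: "(nat \<Rightarrow> nat) set" where
  "L_alpha \<equiv> lin_ext_alpha \<alpha> P le w n"

abbreviation L_alpha_star :: "(nat \<Rightarrow> nat) set" where
  "L_alpha_star \<equiv> lin_ext_alpha_star \<alpha> P le w n"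

lemma mem_L_alpha_iff:
  "\<sigma> \<in> L_alpha \<longleftrightarrow> \<sigma> permutes {1..n}
     \<and> (\<forall>u\<in>{1..n}. \<forall>v\<in>{1..n}. strict le (w_inv u) (w_inv v) \<longrightarrow> inv \<sigma> u < inv \<sigma> v)
     \<and> (\<forall>i<length \<alpha>. \<exists>k. valley_at \<sigma> (block \<alpha> i) k)"
proof -
  have "(\<forall>x\<in>P. \<forall>y\<in>P. strict le x y \<longrightarrow> inv \<sigma> (w x) < inv \<sigma> (w y)) \<longleftrightarrow>
        (\<forall>u\<in>{1..n}. \<forall>v\<in>{1..n}. strict le (w_inv u) (w_inv v) \<longrightarrow> inv \<sigma> u < inv \<sigma> v)"
    using w_inv_mem w_w_inv w_inv_w w_mem by metis
  moreover have "alpha_unimodal \<alpha> \<sigma> \<longleftrightarrow> (\<forall>i<length \<alpha>. \<exists>k. valley_at \<sigma> (block \<alpha> i) k)"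
    unfolding alpha_unimodal_def valley_at_def by blast
  ultimately show ?thesis
    unfolding lin_ext_alpha_def lin_ext_def by blast
qed

lemma L_alpha_permutes: "\<sigma> \<in> L_alpha \<Longrightarrow> \<sigma> permutes {1..n}"
  using mem_L_alpha_iff by blast

lemma L_alpha_inv_less:
  assumes "\<sigma> \<in> L_alpha" "u \<in> {1..n}" "v \<in> {1..n}" "strict le (w_inv u) (w_inv v)"
  shows "inv \<sigma> u < inv \<sigma> v"
  using mem_L_alpha_iff assms by blast

lemma L_alpha_valley:
  assumes "\<sigma> \<in> L_alpha" "i < length \<alpha>"
  obtains k where "valley_at \<sigma> (block \<alpha> i) k"
  using mem_L_alpha_iff assms by blast

definition block_values :: "(nat \<Rightarrow> nat) \<Rightarrow> nat \<Rightarrow> nat set" where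
  "block_values \<sigma> i = \<sigma> ` block \<alpha> i"

definition left_part :: "(nat \<Rightarrow> nat) \<Rightarrow> nat \<Rightarrow> nat set" where
  "left_part \<sigma> i = \<sigma> ` block_descents \<sigma> i"

lemma finite_block_values: "finite (block_values \<sigma> i)"
  by (simp add: block_values_def block_eq)

lemma card_block_values:
  "\<sigma> permutes {1..n} \<Longrightarrow> card (block_values \<sigma> i) = block_start (Suc i) - block_start i"
  unfolding block_values_def by (simp add: card_image permutes_inj_on block_eq)

lemma block_values_nonempty: "i < length \<alpha> \<Longrightarrow> block_values \<sigma> i \<noteq> {}"
  using block_start_strict_mono by (auto simp: block_values_def block_eq)

lemma block_values_subset: "\<sigma> permutes {1..n} \<Longrightarrow> block_values \<sigma> i \<subseteq> {1..n}"
  using block_subset permutes_image unfolding block_values_def by blast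

lemma card_left_part:
  "\<sigma> permutes {1..n} \<Longrightarrow> card (left_part \<sigma> i) = card (block_descents \<sigma> i)"
  unfolding left_part_def by (rule card_image, rule inj_on_subset[OF permutes_inj_on]) (auto simp: block_descents_def)

lemma left_part_valley_at:
  assumes "valley_at \<sigma> (block \<alpha> i) k"
  shows "left_part \<sigma> i = \<sigma> ` {block_start i..<k}"
  using valley_at_descents[of \<sigma> "block_start i" "block_start (Suc i)" k] assms
  by (simp add: block_descents_def left_part_def block_eq)

lemma L_alpha_eq_valley_word:
  assumes "\<sigma> \<in> L_alpha" "i < length \<alpha>" "p \<in> block \<alpha> i"
  shows "\<sigma> p = valley_word (block_start i) (block_values \<sigma> i) (left_part \<sigma> i) p"
proof -
  obtain k where k: "valley_at \<sigma> (block \<alpha> i) k"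
    using L_alpha_valley assms(1,2) .
  show ?thesis
    using valley_at_eq_valley_word[of \<sigma> "block_start i" "block_start (Suc i)" k p]
      k assms(3) permutes_inj_on[OF L_alpha_permutes[OF assms(1)]] left_part_valley_at[OF k]
    by (simp add: block_values_def block_eq)
qed

lemma valley_less_L_alpha:
  assumes "\<sigma> \<in> L_alpha" "i < length \<alpha>" "p \<in> block \<alpha> i" "q \<in> block \<alpha> i" "p < q"
  shows "valley_less (left_part \<sigma> i) (\<sigma> p) (\<sigma> q)"
proof -
  obtain k where k: "valley_at \<sigma> (block \<alpha> i) k"
    using L_alpha_valley assms(1,2) .
  show ?thesis
    using valley_less_valley_at[of \<sigma> "block_start i" "block_start (Suc i)" k p q]
      k assms(3-5) permutes_inj_on[OF L_alpha_permutes[OF assms(1)]] left_part_valley_at[OF k]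
    by (simp add: block_eq)
qed

definition minimal_labels :: "nat set \<Rightarrow> nat set" where
  "minimal_labels Y = {v \<in> Y. \<forall>u\<in>Y. \<not> strict le (w_inv u) (w_inv v)}"

lemma Min_mem_minimal_labels:
  assumes "Y \<subseteq> {1..n}" "finite Y" "Y \<noteq> {}"
  shows "Min Y \<in> minimal_labels Y"
proof -
  have "\<not> strict le (w_inv u) (w_inv (Min Y))" if "u \<in> Y" for u
    using less_if_strict_w_inv[of u "Min Y"] that assms Min_le[OF assms(2) that] Min_in[OF assms(2,3)]
    by fastforce
  then show ?thesis
    unfolding minimal_labels_def using Min_in[OF assms(2,3)] by blast
qed

text \<open>If \<open>u <\<^sub>P v\<close> within the block then \<open>u\<close> comes first, so \<open>v\<close> in the decreasing run would force
  \<open>u > v\<close>, against the natural labeling. The smallest label sits at the valley.\<close>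

lemma left_part_subset_minimal_labels:
  assumes "\<sigma> \<in> L_alpha" "i < length \<alpha>"
  shows "left_part \<sigma> i \<subseteq> minimal_labels (block_values \<sigma> i) - {Min (block_values \<sigma> i)}"
proof
  let ?Y = "block_values \<sigma> i"
  have perm: "\<sigma> permutes {1..n}"
    using L_alpha_permutes[OF assms(1)] .
  fix v assume "v \<in> left_part \<sigma> i"
  then obtain j where j: "j \<in> block \<alpha> i" "Suc j \<in> block \<alpha> i" "\<sigma> (Suc j) < \<sigma> j" "v = \<sigma> j"
    unfolding left_part_def block_descents_def by auto
  have "v \<in> ?Y" "\<sigma> (Suc j) \<in> ?Y"
    using j unfolding block_values_def by auto
  then have "v \<noteq> Min ?Y"
    using Min_le[OF finite_block_values] j(3,4) by fastforce
  moreover have "\<not> strict le (w_inv u) (w_inv v)" if "u \<in> ?Y" for u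
  proof
    assume below: "strict le (w_inv u) (w_inv v)"
    obtain p where p: "p \<in> block \<alpha> i" "u = \<sigma> p"
      using \<open>u \<in> ?Y\<close> unfolding block_values_def by auto
    have labels: "u \<in> {1..n}" "v \<in> {1..n}"
      using block_values_subset[OF perm] \<open>u \<in> ?Y\<close> \<open>v \<in> ?Y\<close> by blast+
    have "p < j"
      using L_alpha_inv_less[OF assms(1) labels below] p j permutes_inverses(2)[OF perm] by simp
    then have "valley_less (left_part \<sigma> i) u v"
      using valley_less_L_alpha[OF assms p(1) j(1)] p j by simp
    then have "v < u"
      using \<open>v \<in> left_part \<sigma> i\<close> by (auto simp: valley_less_def)
    moreover have "u < v"
      using less_if_strict_w_inv[OF labels below] .
    ultimately show False
      by simp
  qed
  ultimately show "v \<in> minimal_labels ?Y - {Min ?Y}"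
    unfolding minimal_labels_def using \<open>v \<in> ?Y\<close> by blast
qed

lemma block_poset_eq: "block_poset \<alpha> P w \<sigma> i = w_inv ` block_values \<sigma> i"
  unfolding block_poset_def block_values_def by auto

lemma unique_min_block_poset_iff:
  assumes "\<sigma> permutes {1..n}" "i < length \<alpha>"
  shows "unique_min le (block_poset \<alpha> P w \<sigma> i) \<longleftrightarrow>
    minimal_labels (block_values \<sigma> i) \<subseteq> {Min (block_values \<sigma> i)}"
proof -
  let ?Y = "block_values \<sigma> i"
  let ?M = "minimal_labels ?Y"
  have Y: "?Y \<subseteq> {1..n}"
    using block_values_subset[OF assms(1)] .
  then have M: "?M \<subseteq> {1..n}"
    unfolding minimal_labels_def by auto
  have Min: "Min ?Y \<in> ?M"
    using Min_mem_minimal_labels[OF Y finite_block_values block_values_nonempty[OF assms(2)]] .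
  have "(x \<in> block_poset \<alpha> P w \<sigma> i \<and> \<not> (\<exists>y\<in>block_poset \<alpha> P w \<sigma> i. strict le y x))
      \<longleftrightarrow> x \<in> w_inv ` ?M" for x
    unfolding block_poset_eq minimal_labels_def by auto
  then have "unique_min le (block_poset \<alpha> P w \<sigma> i) \<longleftrightarrow> (\<exists>!x. x \<in> w_inv ` ?M)"
    unfolding unique_min_def by presburger
  also have "\<dots> \<longleftrightarrow> w_inv ` ?M = w_inv ` {Min ?Y}"
  proof -
    have "(\<exists>!x. x \<in> A) \<longleftrightarrow> A = {a}" if "a \<in> A" for A :: "'a set" and a
      using that by auto
    then show ?thesis
      using imageI[OF Min, of w_inv] by simp
  qed
  also have "\<dots> \<longleftrightarrow> ?M = {Min ?Y}"
    using inj_on_image_eq_iff[OF inj_on_w_inv M, of "{Min ?Y}"] Min M by blast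
  also have "\<dots> \<longleftrightarrow> ?M \<subseteq> {Min ?Y}"
    using Min by blast
  finally show ?thesis .
qed

definition refill :: "(nat \<Rightarrow> nat) \<Rightarrow> nat \<Rightarrow> nat set \<Rightarrow> nat \<Rightarrow> nat" where
  "refill \<sigma> i L p =
     (if p \<in> block \<alpha> i then valley_word (block_start i) (block_values \<sigma> i) L p else \<sigma> p)"

context
  fixes \<sigma> :: "nat \<Rightarrow> nat" and i :: nat and L :: "nat set"
  assumes perm: "\<sigma> permutes {1..n}"
begin

lemma block_eq_card_block_values: "block \<alpha> i = {block_start i..<block_start i + card (block_values \<sigma> i)}"
  using card_block_values[OF perm, of i] block_start_mono[of i "Suc i"] by (simp add: block_eq)

lemma bij_betw_refill_block: "bij_betw (refill \<sigma> i L) (block \<alpha> i) (block_values \<sigma> i)"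
proof -
  have "bij_betw (valley_word (block_start i) (block_values \<sigma> i) L) (block \<alpha> i) (block_values \<sigma> i)"
    using bij_betw_valley_word[OF finite_block_values] block_eq_card_block_values by simp
  then show ?thesis
    by (rule bij_betw_cong[THEN iffD1, rotated]) (simp add: refill_def)
qed

lemma refill_permutes: "refill \<sigma> i L permutes {1..n}"
proof -
  have "(\<lambda>p. if p \<in> block \<alpha> i then refill \<sigma> i L p else \<sigma> p) permutes {1..n}"
    using permutes_override_on[OF perm block_subset] bij_betw_refill_block
    unfolding block_values_def by blast
  moreover have "(\<lambda>p. if p \<in> block \<alpha> i then refill \<sigma> i L p else \<sigma> p) = refill \<sigma> i L"
    by (auto simp: refill_def)
  ultimately show ?thesis
    by simp
qed

lemma block_values_refill: "block_values (refill \<sigma> i L) j = block_values \<sigma> j"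
proof (cases "j = i")
  case True
  then show ?thesis
    using bij_betw_refill_block by (simp add: bij_betw_def block_values_def)
next
  case False
  then have "refill \<sigma> i L p = \<sigma> p" if "p \<in> block \<alpha> j" for p
    using disjoint_blocks[of j i] that by (auto simp: refill_def)
  then show ?thesis
    unfolding block_values_def by (rule image_cong[OF refl])
qed

lemma refill_refill: "refill (refill \<sigma> i L) i M = refill \<sigma> i M"
  using block_values_refill[of i] by (auto simp: refill_def[of "refill \<sigma> i L"] refill_def[of \<sigma>])

lemma block_descents_refill:
  assumes "j \<noteq> i"
  shows "block_descents (refill \<sigma> i L) j = block_descents \<sigma> j"
  using disjoint_blocks[OF assms] by (auto simp: block_descents_def refill_def)

lemma inv_refill_outside:
  assumes "u \<notin> block_values \<sigma> i"
  shows "inv (refill \<sigma> i L) u = inv \<sigma> u"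
proof -
  have "inv \<sigma> u \<notin> block \<alpha> i"
    using assms permutes_inverses(1)[OF perm] unfolding block_values_def by (metis imageI)
  then have "refill \<sigma> i L (inv \<sigma> u) = u"
    using permutes_inverses(1)[OF perm] by (simp add: refill_def)
  then show ?thesis
    using permutes_inv_eq[OF refill_permutes] by blast
qed

lemma inv_refill_block:
  assumes "u \<in> block_values \<sigma> i"
  shows "inv (refill \<sigma> i L) u = block_start i + valley_rank L (block_values \<sigma> i) u"
proof -
  let ?p = "block_start i + valley_rank L (block_values \<sigma> i) u"
  have "valley_rank L (block_values \<sigma> i) u < card (block_values \<sigma> i)"
    using valley_rank_less_card[OF finite_block_values assms] .
  then have "?p \<in> block \<alpha> i"
    using block_eq_card_block_values by simp
  then have "refill \<sigma> i L ?p = u"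
    using valley_word_valley_rank[OF finite_block_values assms] by (simp add: refill_def)
  then show ?thesis
    using permutes_inv_eq[OF refill_permutes] by blast
qed

lemma inv_refill_less_iff:
  assumes "u \<notin> block_values \<sigma> i \<or> v \<notin> block_values \<sigma> i"
  shows "inv (refill \<sigma> i L) u < inv (refill \<sigma> i L) v \<longleftrightarrow> inv \<sigma> u < inv \<sigma> v"
proof -
  have in_block: "inv \<tau> x \<in> block \<alpha> i \<longleftrightarrow> x \<in> block_values \<sigma> i"
    if "\<tau> permutes {1..n}" "\<tau> ` block \<alpha> i = block_values \<sigma> i" for \<tau> x
    using that permutes_inverses[OF that(1)] by (metis image_eqI imageE)
  have "refill \<sigma> i L ` block \<alpha> i = block_values \<sigma> i"
    using bij_betw_refill_block by (simp add: bij_betw_def)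
  note in_block_refill = in_block[OF refill_permutes this] and in_block_\<sigma> = in_block[OF perm]
  show ?thesis
    using assms inv_refill_outside[of u] inv_refill_outside[of v]
      in_block_refill[of u] in_block_refill[of v] in_block_\<sigma>[of u] in_block_\<sigma>[of v]
    by (auto simp: block_values_def block_eq)
qed

end

lemma refill_left_part:
  assumes "\<sigma> \<in> L_alpha" "i < length \<alpha>"
  shows "refill \<sigma> i (left_part \<sigma> i) = \<sigma>"
  using L_alpha_eq_valley_word[OF assms] by (auto simp: refill_def)

context
  fixes \<sigma> :: "nat \<Rightarrow> nat" and i :: nat and L :: "nat set"
  assumes \<sigma>: "\<sigma> \<in> L_alpha" and i: "i < length \<alpha>"
    and L: "L \<subseteq> minimal_labels (block_values \<sigma> i) - {Min (block_values \<sigma> i)}"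
begin

lemma valley_at_refill: "valley_at (refill \<sigma> i L) (block \<alpha> i) (block_start i + card L)"
proof -
  have perm: "\<sigma> permutes {1..n}"
    using L_alpha_permutes[OF \<sigma>] .
  have "L \<subseteq> block_values \<sigma> i - {Min (block_values \<sigma> i)}"
    using L unfolding minimal_labels_def by blast
  then have "valley_at (valley_word (block_start i) (block_values \<sigma> i) L) (block \<alpha> i) (block_start i + card L)"
    using valley_at_valley_word[OF finite_block_values block_values_nonempty[OF i]]
      block_eq_card_block_values[OF perm] by simp
  then show ?thesis
    by (rule valley_at_cong[THEN iffD1, rotated]) (simp add: refill_def)
qed

lemma left_part_refill: "left_part (refill \<sigma> i L) i = L"
proof -
  have "L \<subseteq> block_values \<sigma> i"
    using L unfolding minimal_labels_def by blast
  have "left_part (refill \<sigma> i L) i = refill \<sigma> i L ` {block_start i..<block_start i + card L}"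
    using left_part_valley_at[OF valley_at_refill] .
  also have "\<dots> = valley_word (block_start i) (block_values \<sigma> i) L ` {block_start i..<block_start i + card L}"
    using valley_at_refill by (intro image_cong) (auto simp: refill_def block_eq valley_at_def)
  also have "\<dots> = L"
    using valley_word_image_prefix[OF finite_block_values \<open>L \<subseteq> block_values \<sigma> i\<close>] .
  finally show ?thesis .
qed

lemma refill_mem_L_alpha: "refill \<sigma> i L \<in> L_alpha"
proof -
  let ?h = "refill \<sigma> i L" and ?Y = "block_values \<sigma> i"
  have perm: "\<sigma> permutes {1..n}"
    using L_alpha_permutes[OF \<sigma>] .
  have "inv ?h u < inv ?h v"
    if labels: "u \<in> {1..n}" "v \<in> {1..n}" and below: "strict le (w_inv u) (w_inv v)" for u v
  proof (cases "u \<in> ?Y \<and> v \<in> ?Y")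
    case True
    then have "v \<notin> L"
      using L below unfolding minimal_labels_def by blast
    then have "valley_less L u v"
      using less_if_strict_w_inv[OF labels below] by (simp add: valley_less_def)
    then show ?thesis
      using True inv_refill_block[OF perm] valley_rank_strict_mono[OF finite_block_values] by simp
  next
    case False
    then show ?thesis
      using inv_refill_less_iff[OF perm] L_alpha_inv_less[OF \<sigma> labels below] by blast
  qed
  moreover have "\<exists>k. valley_at ?h (block \<alpha> j) k" if j: "j < length \<alpha>" for j
  proof (cases "j = i")
    case True
    then show ?thesis
      using valley_at_refill by blast
  next
    case False
    obtain k where "valley_at \<sigma> (block \<alpha> j) k"
      using L_alpha_valley[OF \<sigma> j] .
    moreover have "?h p = \<sigma> p" if "p \<in> block \<alpha> j" for p
      using disjoint_blocks[OF False] that by (auto simp: refill_def)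
    ultimately show ?thesis
      using valley_at_cong by blast
  qed
  ultimately show ?thesis
    using refill_permutes[OF perm] by (simp add: mem_L_alpha_iff)
qed

lemma card_inner_descents_refill:
  "card (inner_descents (refill \<sigma> i L)) + card (left_part \<sigma> i) = card (inner_descents \<sigma>) + card L"
proof -
  have perm: "\<sigma> permutes {1..n}"
    using L_alpha_permutes[OF \<sigma>] .
  have "card (inner_descents \<tau>) =
      card (left_part \<tau> i) + (\<Sum>j\<in>{..<length \<alpha>} - {i}. card (block_descents \<tau> j))"
    if "\<tau> permutes {1..n}" for \<tau>
    using card_inner_descents[of \<tau>] sum.remove[of "{..<length \<alpha>}" i] i card_left_part[OF that, of i]
    by simp
  moreover have "(\<Sum>j\<in>{..<length \<alpha>} - {i}. card (block_descents (refill \<sigma> i L) j)) =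
      (\<Sum>j\<in>{..<length \<alpha>} - {i}. card (block_descents \<sigma> j))"
    using block_descents_refill[OF perm] by simp
  ultimately show ?thesis
    using refill_permutes[OF perm] perm left_part_refill by simp
qed

end

definition defective_blocks :: "(nat \<Rightarrow> nat) \<Rightarrow> nat set" where
  "defective_blocks \<sigma> = {i. i < length \<alpha> \<and> \<not> unique_min le (block_poset \<alpha> P w \<sigma> i)}"

text \<open>The block and the label chosen next depend only on the block values, which \<open>refill\<close>
  preserves; this is what makes \<open>toggle\<close> an involution.\<close>

definition first_defect :: "(nat \<Rightarrow> nat) \<Rightarrow> nat" where
  "first_defect \<sigma> = Min (defective_blocks \<sigma>)"

definition toggled_label :: "(nat \<Rightarrow> nat) \<Rightarrow> nat" where
  "toggled_label \<sigma> =
     Max (minimal_labels (block_values \<sigma> (first_defect \<sigma>)) - {Min (block_values \<sigma> (first_defect \<sigma>))})"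

definition toggle :: "(nat \<Rightarrow> nat) \<Rightarrow> nat \<Rightarrow> nat" where
  "toggle \<sigma> =
     refill \<sigma> (first_defect \<sigma>) (toggle_member (toggled_label \<sigma>) (left_part \<sigma> (first_defect \<sigma>)))"

lemma mem_L_alpha_star_iff: "\<sigma> \<in> L_alpha_star \<longleftrightarrow> \<sigma> \<in> L_alpha \<and> defective_blocks \<sigma> = {}"
  unfolding lin_ext_alpha_star_def defective_blocks_def by auto

lemma defective_blocks_refill:
  "\<sigma> permutes {1..n} \<Longrightarrow> defective_blocks (refill \<sigma> i L) = defective_blocks \<sigma>"
  unfolding defective_blocks_def block_poset_eq by (simp add: block_values_refill)

lemma card_inner_descents_L_alpha_star:
  assumes "\<sigma> \<in> L_alpha_star"
  shows "card (inner_descents \<sigma>) = 0"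
proof -
  have \<sigma>: "\<sigma> \<in> L_alpha" and perm: "\<sigma> permutes {1..n}"
    using assms L_alpha_permutes unfolding mem_L_alpha_star_iff by auto
  have "card (block_descents \<sigma> i) = 0" if "i < length \<alpha>" for i
  proof -
    have "minimal_labels (block_values \<sigma> i) \<subseteq> {Min (block_values \<sigma> i)}"
      using assms that unique_min_block_poset_iff[OF perm that]
      unfolding mem_L_alpha_star_iff defective_blocks_def by blast
    then have "left_part \<sigma> i = {}"
      using left_part_subset_minimal_labels[OF \<sigma> that] by blast
    then show ?thesis
      using card_left_part[OF perm, of i] by simp
  qed
  then show ?thesis
    using card_inner_descents by simp
qed

context
  fixes \<sigma> :: "nat \<Rightarrow> nat"
  assumes \<sigma>: "\<sigma> \<in> L_alpha" and not_star: "\<sigma> \<notin> L_alpha_star"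
begin

lemma first_defect_mem: "first_defect \<sigma> \<in> defective_blocks \<sigma>"
proof -
  have "defective_blocks \<sigma> \<noteq> {}"
    using \<sigma> not_star mem_L_alpha_star_iff by blast
  then show ?thesis
    unfolding first_defect_def by (rule Min_in[rotated]) (simp add: defective_blocks_def)
qed

lemma toggle_member_subset_minimal_labels:
  defines "i \<equiv> first_defect \<sigma>"
  shows "toggle_member (toggled_label \<sigma>) (left_part \<sigma> i)
    \<subseteq> minimal_labels (block_values \<sigma> i) - {Min (block_values \<sigma> i)}"
proof (rule toggle_member_subset)
  let ?M = "minimal_labels (block_values \<sigma> i) - {Min (block_values \<sigma> i)}"
  have i: "i < length \<alpha>" "\<not> unique_min le (block_poset \<alpha> P w \<sigma> i)"
    using first_defect_mem unfolding i_def defective_blocks_def by auto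
  then have "?M \<noteq> {}"
    using unique_min_block_poset_iff[OF L_alpha_permutes[OF \<sigma>]] by blast
  moreover have "finite ?M"
    using finite_block_values unfolding minimal_labels_def by simp
  ultimately show "toggled_label \<sigma> \<in> ?M"
    unfolding toggled_label_def i_def by (rule Max_in[rotated])
  show "left_part \<sigma> i \<subseteq> ?M"
    using left_part_subset_minimal_labels[OF \<sigma> i(1)] .
qed

lemma toggle_mem_L_alpha: "toggle \<sigma> \<in> L_alpha"
  unfolding toggle_def
  using refill_mem_L_alpha[OF \<sigma> _ toggle_member_subset_minimal_labels] first_defect_mem
  by (simp add: defective_blocks_def)

lemma defective_blocks_toggle: "defective_blocks (toggle \<sigma>) = defective_blocks \<sigma>"
  unfolding toggle_def using defective_blocks_refill[OF L_alpha_permutes[OF \<sigma>]] .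

lemma toggle_toggle: "toggle (toggle \<sigma>) = \<sigma>"
proof -
  let ?i = "first_defect \<sigma>" and ?t = "toggled_label \<sigma>"
  have perm: "\<sigma> permutes {1..n}"
    using L_alpha_permutes[OF \<sigma>] .
  have i: "?i < length \<alpha>"
    using first_defect_mem by (simp add: defective_blocks_def)
  have same_defect: "first_defect (toggle \<sigma>) = ?i"
    unfolding first_defect_def defective_blocks_toggle ..
  have same_label: "toggled_label (toggle \<sigma>) = ?t"
    unfolding toggled_label_def same_defect unfolding toggle_def block_values_refill[OF perm] ..
  have "left_part (toggle \<sigma>) ?i = toggle_member ?t (left_part \<sigma> ?i)"
    unfolding toggle_def using left_part_refill[OF \<sigma> i toggle_member_subset_minimal_labels] .
  then have "toggle (toggle \<sigma>) = refill (toggle \<sigma>) ?i (left_part \<sigma> ?i)"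
    unfolding toggle_def[of "toggle \<sigma>"] same_defect same_label by (simp add: toggle_member_toggle_member)
  also have "\<dots> = refill \<sigma> ?i (left_part \<sigma> ?i)"
    unfolding toggle_def by (rule refill_refill[OF perm])
  also have "\<dots> = \<sigma>"
    by (rule refill_left_part[OF \<sigma> i])
  finally show ?thesis .
qed

lemma sign_toggle:
  "(-1::int) ^ card (inner_descents (toggle \<sigma>)) = - ((-1) ^ card (inner_descents \<sigma>))"
proof -
  let ?i = "first_defect \<sigma>"
  have i: "?i < length \<alpha>"
    using first_defect_mem by (simp add: defective_blocks_def)
  have "finite (left_part \<sigma> ?i)"
    by (simp add: left_part_def block_descents_def block_eq)
  then have "card (toggle_member (toggled_label \<sigma>) (left_part \<sigma> ?i)) = Suc (card (left_part \<sigma> ?i))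
      \<or> Suc (card (toggle_member (toggled_label \<sigma>) (left_part \<sigma> ?i))) = card (left_part \<sigma> ?i)"
    by (rule card_toggle_member)
  moreover have "card (inner_descents (toggle \<sigma>)) + card (left_part \<sigma> ?i)
      = card (inner_descents \<sigma>) + card (toggle_member (toggled_label \<sigma>) (left_part \<sigma> ?i))"
    unfolding toggle_def by (rule card_inner_descents_refill[OF \<sigma> i toggle_member_subset_minimal_labels])
  ultimately have "card (inner_descents (toggle \<sigma>)) = Suc (card (inner_descents \<sigma>))
      \<or> Suc (card (inner_descents (toggle \<sigma>))) = card (inner_descents \<sigma>)"
    by linarith
  then show ?thesis
  proof
    assume shorter: "Suc (card (inner_descents (toggle \<sigma>))) = card (inner_descents \<sigma>)"
    show ?thesis
      by (simp flip: shorter)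
  qed simp
qed

end

lemma sum_sign_L_alpha:
  "(\<Sum>\<sigma>\<in>L_alpha. (-1::int) ^ card (inner_descents \<sigma>)) = int (card L_alpha_star)"
proof -
  let ?sign = "\<lambda>\<sigma>. (-1::int) ^ card (inner_descents \<sigma>)"
  have "L_alpha_star \<subseteq> L_alpha"
    using mem_L_alpha_star_iff by blast
  moreover have "finite L_alpha"
    by (rule finite_subset[OF _ finite_permutations[of "{1..n}"]]) (use L_alpha_permutes in auto)
  ultimately have "sum ?sign L_alpha = sum ?sign (L_alpha - L_alpha_star) + sum ?sign L_alpha_star"
    by (rule sum.subset_diff)
  moreover have "sum ?sign (L_alpha - L_alpha_star) = 0"
  proof (rule sum_involution_eq_0[where h = toggle])
    fix \<sigma> assume "\<sigma> \<in> L_alpha - L_alpha_star"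
    then have \<sigma>: "\<sigma> \<in> L_alpha" "\<sigma> \<notin> L_alpha_star"
      by auto
    show "?sign (toggle \<sigma>) + ?sign \<sigma> = 0"
      using sign_toggle[OF \<sigma>] by simp
    show "toggle \<sigma> \<in> L_alpha - L_alpha_star"
      using toggle_mem_L_alpha[OF \<sigma>] defective_blocks_toggle[OF \<sigma>] \<sigma> mem_L_alpha_star_iff by blast
    show "toggle (toggle \<sigma>) = \<sigma>"
      using toggle_toggle[OF \<sigma>] .
    show "toggle \<sigma> \<noteq> \<sigma>"
      using sign_toggle[OF \<sigma>] by (metis neg_equal_zero power_eq_0_iff zero_neq_neg_one)
  qed
  moreover have "sum ?sign L_alpha_star = int (card L_alpha_star)"
    using card_inner_descents_L_alpha_star by simp
  ultimately show ?thesis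
    by simp
qed

end

theorem theorem2p8:
  fixes P :: "'a set" and le :: "'a \<Rightarrow> 'a \<Rightarrow> bool" and w :: "'a \<Rightarrow> nat"
    and n :: nat and \<alpha> :: "nat list"
  assumes "labeled_poset P le w n"
    and "naturally_labeled P le w"
    and "is_composition \<alpha> n"
  shows "(\<Sum>\<sigma>\<in>lin_ext_alpha \<alpha> P le w n. (-1::int) ^ card (Des n \<sigma> - comp_set \<alpha>))
         = int (card (lin_ext_alpha_star \<alpha> P le w n))"
proof -
  interpret naturally_labeled_composition P le w n \<alpha>
    using assms by unfold_locales
  show ?thesis
    by (rule sum_sign_L_alpha)
qed

end
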